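(* Let $G$ be a directed graph with real edge weights and no cycle of negative or zero weight, and let $(s_1,t_1),(s_2,t_2)$ be vertex pairs with $t_i$ reachable from $s_i$. Let $k^*$ be the minimum, over all pairs $(Q_1,Q_2)$ with $Q_i$ a shortest $s_i$–$t_i$ path, of the number of common vertices of $Q_1,Q_2$ outside $\{s_1,t_1\}\cap\{s_2,t_2\}$. Let $P_1,P_2$ be shortest paths from $s_1$ to $t_1$ and from $s_2$ to $t_2$ respectively that intersect in exactly $k^*$ internal vertices, and let $(u,v)$ be a concordant pair for $P_1,P_2$. Then the subpaths $P_1[u,v]$ and $P_2[u,v]$ have exactly $\delta(u,v)$ vertices in common, and these common vertices are precisely the $(u,v)$-distance-critical vertices.
   Context: For a path $P$ and vertices $x,y$ on $P$, $x$ precedes $y$ if $x=y$ or $x$ appears before $y$ on $P$; $P[x,y]$ is the subpath from $x$ to $y$. Paths from $x_1$ to $y_1$ and from $x_2$ to $y_2$ are internally vertex-disjoint if they share no vertex outside $\{x_1,y_1\}\cap\{x_2,y_2\}$. A pair $(a,b)$, not contained in $\{x_1,y_1\}\cap\{x_2,y_2\}$, is a concordant pair for paths $P_1$ (from $x_1$ to $y_1$) and $P_2$ (from $x_2$ to $y_2$) if $a$ precedes $b$ on both paths, $P_1[x_1,a]$ and $P_2[x_2,a]$ are internally vertex-disjoint, and $P_1[b,y_1]$ and $P_2[b,y_2]$ are internally vertex-disjoint. A vertex $w$ is $(x,y)$-distance-critical if $w\in\{x,y\}$ or removing $w$ from $G$ increases the distance from $x$ to $y$; $\delta(x,y)$ is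 the number of $(x,y)$-distance-critical vertices (so $\delta(x,x)=1$). *)

theory Defs
  imports "HOL-Library.Extended_Real"
begin

definition wf_digraph :: "'a set \<Rightarrow> ('a \<times> 'a) set \<Rightarrow> bool" where
  "wf_digraph V E \<longleftrightarrow> finite V \<and> E \<subseteq> V \<times> V"

definition is_walk :: "'a set \<Rightarrow> ('a \<times> 'a) set \<Rightarrow> 'a list \<Rightarrow> bool" where
  "is_walk V E p \<longleftrightarrow> p \<noteq> [] \<and> set p \<subseteq> V \<and> (\<forall>i. Suc i < length p \<longrightarrow> (p ! i, p ! Suc i) \<in> E)"

definition is_path :: "'a set \<Rightarrow> ('a \<times> 'a) set \<Rightarrow> 'a list \<Rightarrow> bool" where
  "is_path V E p \<longleftrightarrow> is_walk V E p \<and> distinct p"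

definition is_cycle :: "'a set \<Rightarrow> ('a \<times> 'a) set \<Rightarrow> 'a list \<Rightarrow> bool" where
  "is_cycle V E c \<longleftrightarrow> is_walk V E c \<and> length c \<ge> 2 \<and> hd c = last c \<and> distinct (tl c)"

definition pweight :: "('a \<Rightarrow> 'a \<Rightarrow> real) \<Rightarrow> 'a list \<Rightarrow> real" where
  "pweight w p = (\<Sum>i<length p - 1. w (p ! i) (p ! Suc i))"

definition path_from_to :: "'a set \<Rightarrow> ('a \<times> 'a) set \<Rightarrow> 'a list \<Rightarrow> 'a \<Rightarrow> 'a \<Rightarrow> bool" where
  "path_from_to V E p x y \<longleftrightarrow> is_path V E p \<and> hd p = x \<and> last p = y"

definition reachable :: "'a set \<Rightarrow> ('a \<times> 'a) set \<Rightarrow> 'a \<Rightarrow> 'a \<Rightarrow> bool" where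
  "reachable V E x y \<longleftrightarrow> (\<exists>p. path_from_to V E p x y)"

text \<open>Distance from x to y in G (\<infinity> if y is not reachable).\<close>
definition dist :: "'a set \<Rightarrow> ('a \<times> 'a) set \<Rightarrow> ('a \<Rightarrow> 'a \<Rightarrow> real) \<Rightarrow> 'a \<Rightarrow> 'a \<Rightarrow> ereal" where
  "dist V E w x y = Inf {ereal (pweight w p) | p. path_from_to V E p x y}"

definition del_vertex_V :: "'a set \<Rightarrow> 'a \<Rightarrow> 'a set" where
  "del_vertex_V V z = V - {z}"

definition del_vertex_E :: "('a \<times> 'a) set \<Rightarrow> 'a \<Rightarrow> ('a \<times> 'a) set" where
  "del_vertex_E E z = {(a, b) \<in> E. a \<noteq> z \<and> b \<noteq> z}"

definition shortest_path :: "'a set \<Rightarrow> ('a \<times> 'a) set \<Rightarrow> ('a \<Rightarrow> 'a \<Rightarrow> real) \<Rightarrow> 'a list \<Rightarrow> 'a \<Rightarrow> 'a \<Rightarrow> bool" where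
  "shortest_path V E w p x y \<longleftrightarrow> path_from_to V E p x y \<and> ereal (pweight w p) = dist V E w x y"

definition pos :: "'a list \<Rightarrow> 'a \<Rightarrow> nat" where
  "pos P x = (LEAST i. i < length P \<and> P ! i = x)"

definition precedes :: "'a list \<Rightarrow> 'a \<Rightarrow> 'a \<Rightarrow> bool" where
  "precedes P x y \<longleftrightarrow> x \<in> set P \<and> y \<in> set P \<and> (x = y \<or> pos P x < pos P y)"

definition subpath :: "'a list \<Rightarrow> 'a \<Rightarrow> 'a \<Rightarrow> 'a list" where
  "subpath P x y = drop (pos P x) (take (Suc (pos P y)) P)"

definition int_disjoint :: "'a list \<Rightarrow> 'a \<Rightarrow> 'a \<Rightarrow> 'a list \<Rightarrow> 'a \<Rightarrow> 'a \<Rightarrow> bool" where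
  "int_disjoint P1 x1 y1 P2 x2 y2 \<longleftrightarrow> set P1 \<inter> set P2 \<subseteq> {x1, y1} \<inter> {x2, y2}"

definition concordant :: "'a list \<Rightarrow> 'a \<Rightarrow> 'a \<Rightarrow> 'a list \<Rightarrow> 'a \<Rightarrow> 'a \<Rightarrow> 'a \<Rightarrow> 'a \<Rightarrow> bool" where
  "concordant P1 x1 y1 P2 x2 y2 a b \<longleftrightarrow>
     \<not> ({a, b} \<subseteq> {x1, y1} \<inter> {x2, y2}) \<and>
     precedes P1 a b \<and> precedes P2 a b \<and>
     int_disjoint (subpath P1 x1 a) x1 a (subpath P2 x2 a) x2 a \<and>
     int_disjoint (subpath P1 b y1) b y1 (subpath P2 b y2) b y2"

definition dist_critical :: "'a set \<Rightarrow> ('a \<times> 'a) set \<Rightarrow> ('a \<Rightarrow> 'a \<Rightarrow> real) \<Rightarrow> 'a \<Rightarrow> 'a \<Rightarrow> 'a \<Rightarrow> bool" where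
  "dist_critical V E w x y z \<longleftrightarrow> z \<in> V \<and>
     (z \<in> {x, y} \<or> dist (del_vertex_V V z) (del_vertex_E E z) w x y > dist V E w x y)"

definition delta :: "'a set \<Rightarrow> ('a \<times> 'a) set \<Rightarrow> ('a \<Rightarrow> 'a \<Rightarrow> real) \<Rightarrow> 'a \<Rightarrow> 'a \<Rightarrow> nat" where
  "delta V E w x y = card {z. dist_critical V E w x y z}"

definition n_common :: "'a list \<Rightarrow> 'a \<Rightarrow> 'a \<Rightarrow> 'a list \<Rightarrow> 'a \<Rightarrow> 'a \<Rightarrow> nat" where
  "n_common Q1 s1 t1 Q2 s2 t2 = card ((set Q1 \<inter> set Q2) - ({s1, t1} \<inter> {s2, t2}))"

definition kstar :: "'a set \<Rightarrow> ('a \<times> 'a) set \<Rightarrow> ('a \<Rightarrow> 'a \<Rightarrow> real) \<Rightarrow> 'a \<Rightarrow> 'a \<Rightarrow> 'a \<Rightarrow> 'a \<Rightarrow> nat" where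
  "kstar V E w s1 t1 s2 t2 = (LEAST k. \<exists>Q1 Q2. shortest_path V E w Q1 s1 t1 \<and>
      shortest_path V E w Q2 s2 t2 \<and> n_common Q1 s1 t1 Q2 s2 t2 = k)"

end

(*
  M1 = P1[u,v] and M2 = P2[u,v] are shortest u-v paths. A distance-critical vertex lies on every
  shortest u-v path, hence on both. Conversely, let z be a common vertex of M1 and M2 other than u, v
  that is not critical: then some u-v walk R avoiding z is no heavier than M1. Since all cycles are
  positive, such a light walk meets P1 and P2 only between u and v, so R crosses from the parts of
  M1, M2 before z to the parts after z along a bridge meeting P1 and P2 only at its ends. Rerouting
  P1, or P1 and P2 crosswise, along this bridge yields shortest paths whose common vertices are
  among those of P1 and P2 except z, contradicting the minimality of k*.
*)
theory Submission
  imports Defs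
begin

section \<open>Walks, their weights and segments\<close>

lemma pweight_singleton [simp]: "pweight w [a] = 0"
  by (simp add: pweight_def)

lemma pweight_Cons_Cons [simp]: "pweight w (a # b # p) = w a b + pweight w (b # p)"
proof -
  have "pweight w (a # b # p) = (\<Sum>i<Suc (length p). w ((a # b # p) ! i) ((a # b # p) ! Suc i))"
    by (simp add: pweight_def)
  also have "\<dots> = w a b + (\<Sum>i<length p. w ((b # p) ! i) ((b # p) ! Suc i))"
    by (subst sum.lessThan_Suc_shift) simp
  finally show ?thesis by (simp add: pweight_def)
qed

lemma pweight_append_shared: "pweight w (xs @ r # ys) = pweight w (xs @ [r]) + pweight w (r # ys)"
proof (induction xs)
  case (Cons a xs)
  then show ?case by (cases xs) auto
qed simp

lemma is_walk_iff_successively: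
  "is_walk V E p \<longleftrightarrow> p \<noteq> [] \<and> set p \<subseteq> V \<and> successively (\<lambda>a b. (a, b) \<in> E) p"
  unfolding is_walk_def successively_conv_nth by blast

lemma is_walk_not_Nil: "is_walk V E p \<Longrightarrow> p \<noteq> []"
  by (simp add: is_walk_def)

definition join_walk :: "'a list \<Rightarrow> 'a list \<Rightarrow> 'a list" where
  "join_walk p q = p @ tl q"

context
  fixes p q :: "'a list"
  assumes ne: "p \<noteq> []" "q \<noteq> []" and meet: "last p = hd q"
begin

lemma hd_join_walk: "hd (join_walk p q) = hd p"
  using ne by (simp add: join_walk_def)

lemma last_join_walk: "last (join_walk p q) = last q"
  using ne meet by (cases q) (auto simp: join_walk_def)

lemma set_join_walk: "set (join_walk p q) = set p \<union> set q"
  using ne meet by (cases q) (auto simp: join_walk_def)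

lemma pweight_join_walk: "pweight w (join_walk p q) = pweight w p + pweight w q"
proof -
  have "pweight w (join_walk p q) = pweight w (butlast p @ last p # tl q)"
    unfolding join_walk_def by (subst append_butlast_last_id[OF ne(1), symmetric]) simp
  also have "\<dots> = pweight w (butlast p @ [last p]) + pweight w (last p # tl q)"
    by (rule pweight_append_shared)
  also have "\<dots> = pweight w p + pweight w q"
    using ne meet by (metis append_butlast_last_id hd_Cons_tl)
  finally show ?thesis .
qed

end

lemma is_walk_join_walk:
  "is_walk V E p \<Longrightarrow> is_walk V E q \<Longrightarrow> last p = hd q \<Longrightarrow> is_walk V E (join_walk p q)"
  unfolding is_walk_iff_successively join_walk_def
  by (cases q) (auto simp: successively_append_iff successively_Cons)

lemmas join_walk_simps = hd_join_walk last_join_walk set_join_walk pweight_join_walk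

definition segment :: "'a list \<Rightarrow> nat \<Rightarrow> nat \<Rightarrow> 'a list" where
  "segment P i j = drop i (take (Suc j) P)"

lemma subpath_eq_segment: "subpath P x y = segment P (pos P x) (pos P y)"
  by (simp add: subpath_def segment_def)

lemma length_segment: "j < length P \<Longrightarrow> length (segment P i j) = Suc j - i"
  by (simp add: segment_def)

lemma nth_segment: "j < length P \<Longrightarrow> k < Suc j - i \<Longrightarrow> segment P i j ! k = P ! (i + k)"
  by (simp add: segment_def)

lemma segment_not_Nil: "i \<le> j \<Longrightarrow> j < length P \<Longrightarrow> segment P i j \<noteq> []"
  by (simp add: segment_def)

lemma hd_segment: "i \<le> j \<Longrightarrow> j < length P \<Longrightarrow> hd (segment P i j) = P ! i"
  by (simp add: segment_def hd_drop_conv_nth)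

lemma last_segment: "i \<le> j \<Longrightarrow> j < length P \<Longrightarrow> last (segment P i j) = P ! j"
  by (simp add: segment_def last_conv_nth)

lemma distinct_segment: "distinct P \<Longrightarrow> distinct (segment P i j)"
  by (simp add: segment_def)

lemma segment_whole: "P \<noteq> [] \<Longrightarrow> segment P 0 (length P - 1) = P"
  by (simp add: segment_def)

lemma set_segment: "j < length P \<Longrightarrow> set (segment P i j) = {P ! k | k. i \<le> k \<and> k \<le> j}"
proof (intro set_eqI iffI)
  fix c assume j: "j < length P" and "c \<in> set (segment P i j)"
  then obtain k where "k < length (segment P i j)" "segment P i j ! k = c"
    by (auto simp: in_set_conv_nth)
  then show "c \<in> {P ! k | k. i \<le> k \<and> k \<le> j}"
    using j by (auto simp: length_segment nth_segment intro!: exI[of _ "i + k"])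
next
  fix c assume j: "j < length P" and "c \<in> {P ! k | k. i \<le> k \<and> k \<le> j}"
  then obtain k where k: "i \<le> k" "k \<le> j" "c = P ! k" by auto
  then have "segment P i j ! (k - i) = c" "k - i < length (segment P i j)"
    using j by (auto simp: length_segment nth_segment)
  then show "c \<in> set (segment P i j)" by (metis nth_mem)
qed

lemma is_walk_segment:
  "is_walk V E P \<Longrightarrow> i \<le> j \<Longrightarrow> j < length P \<Longrightarrow> is_walk V E (segment P i j)"
  unfolding is_walk_def
  by (auto simp: segment_not_Nil length_segment nth_segment)
    (auto simp: segment_def dest: in_set_dropD in_set_takeD)

lemma pweight_segment_split:
  assumes "i \<le> j" "j \<le> k" "k < length P"
  shows "pweight w (segment P i k) = pweight w (segment P i j) + pweight w (segment P j k)"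
proof -
  define L where "L = segment P i k"
  have jL: "j - i < length L"
    using assms by (simp add: L_def length_segment)
  have "pweight w L = pweight w (take (j - i) L @ [L ! (j - i)]) + pweight w (L ! (j - i) # drop (Suc (j - i)) L)"
    using pweight_append_shared id_take_nth_drop[OF jL] by metis
  also have "take (j - i) L @ [L ! (j - i)] = take (Suc (j - i)) L"
    using jL by (simp add: take_Suc_conv_app_nth)
  also have "\<dots> = segment P i j"
    using assms by (simp add: L_def segment_def take_drop min_def)
  also have "L ! (j - i) # drop (Suc (j - i)) L = drop (j - i) L"
    using jL by (simp add: Cons_nth_drop_Suc)
  also have "\<dots> = segment P j k"
    using assms by (simp add: L_def segment_def)
  finally show ?thesis
    unfolding L_def .
qed

lemma pweight_segment_split3:
  assumes "i \<le> j" "j < length P"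
  shows "pweight w P = pweight w (segment P 0 i) + pweight w (segment P i j) + pweight w (segment P j (length P - 1))"
  using assms pweight_segment_split[of 0 i "length P - 1" P w] pweight_segment_split[of i j "length P - 1" P w]
    segment_whole[of P]
  by (cases P) auto

lemma pos_nth: "distinct P \<Longrightarrow> k < length P \<Longrightarrow> pos P (P ! k) = k"
  unfolding pos_def by (rule Least_equality) (auto simp: nth_eq_iff_index_eq intro: leI)

lemma pos_less_length: "distinct P \<Longrightarrow> c \<in> set P \<Longrightarrow> pos P c < length P"
  by (metis in_set_conv_nth pos_nth)

lemma nth_pos: "distinct P \<Longrightarrow> c \<in> set P \<Longrightarrow> P ! pos P c = c"
  by (metis in_set_conv_nth pos_nth)

lemma mem_segment_iff:
  "distinct P \<Longrightarrow> j < length P \<Longrightarrow>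
    c \<in> set (segment P i j) \<longleftrightarrow> c \<in> set P \<and> i \<le> pos P c \<and> pos P c \<le> j"
  using pos_less_length[of P c] nth_pos[of P c] pos_nth[of P] by (auto simp: set_segment) metis

definition splice :: "'a list \<Rightarrow> nat \<Rightarrow> nat \<Rightarrow> 'a list \<Rightarrow> 'a list" where
  "splice P i j W = join_walk (join_walk (segment P 0 i) W) (segment P j (length P - 1))"

lemma splice_walk:
  assumes P: "is_walk V E P" "i < length P" "j < length P"
    and W: "is_walk V E W" "hd W = P ! i" "last W = P ! j"
  shows "is_walk V E (splice P i j W)" "hd (splice P i j W) = hd P" "last (splice P i j W) = last P"
    and "pweight w (splice P i j W) =
      pweight w (segment P 0 i) + pweight w W + pweight w (segment P j (length P - 1))"
    and "set (splice P i j W) = set (segment P 0 i) \<union> set W \<union> set (segment P j (length P - 1))"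
proof -
  define A where "A = segment P 0 i"
  define C where "C = segment P j (length P - 1)"
  have A: "is_walk V E A" "hd A = hd P" "last A = hd W"
    using P W is_walk_segment[OF P(1)] is_walk_not_Nil[OF P(1)]
    by (auto simp: A_def hd_segment last_segment hd_conv_nth)
  have C: "is_walk V E C" "hd C = last W" "last C = last P"
    using P W is_walk_segment[OF P(1)] is_walk_not_Nil[OF P(1)]
    by (auto simp: C_def hd_segment last_segment last_conv_nth)
  have AW: "is_walk V E (join_walk A W)" "last (join_walk A W) = hd C"
    using A C W by (auto simp: is_walk_join_walk join_walk_simps is_walk_not_Nil)
  have ne: "A \<noteq> []" "W \<noteq> []" "C \<noteq> []" "join_walk A W \<noteq> []"
    using A(1) C(1) W(1) AW(1) is_walk_not_Nil by blast+
  show "is_walk V E (splice P i j W)"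
    using AW C by (simp add: splice_def A_def C_def is_walk_join_walk)
  show "hd (splice P i j W) = hd P" "last (splice P i j W) = last P"
    "pweight w (splice P i j W) = pweight w A + pweight w W + pweight w C"
    "set (splice P i j W) = set A \<union> set W \<union> set C"
    using A C AW ne by (simp_all add: splice_def A_def C_def join_walk_simps)
qed

lemma bridge_indices:
  assumes "xs \<noteq> []" "X (hd xs)" "Y (last xs)" "\<not> X (last xs)"
  obtains i j where "i < j" "j < length xs" "X (xs ! i)" "Y (xs ! j)"
    and "\<And>k. i < k \<Longrightarrow> k < j \<Longrightarrow> \<not> X (xs ! k) \<and> \<not> Y (xs ! k)"
proof -
  define n where "n = length xs"
  define I where "I = {k. k < n \<and> X (xs ! k)}"
  have I: "finite I" "0 \<in> I"
    using assms(1,2) by (auto simp: I_def n_def hd_conv_nth)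
  define i where "i = Max I"
  have "i \<in> I"
    unfolding i_def using I by (intro Max_in) auto
  then have i: "i < n" "X (xs ! i)"
    by (simp_all add: I_def)
  have i_max: "k \<le> i" if "k < n" "X (xs ! k)" for k
    using Max_ge[OF I(1)] that by (auto simp: i_def I_def)
  have last: "xs ! (n - 1) = last xs"
    using assms(1) by (simp add: n_def last_conv_nth)
  then have "i < n - 1"
    using i assms(4) by (metis Suc_pred' less_Suc_eq not_less0 zero_less_iff_neq_zero)
  then have ex: "i < n - 1 \<and> n - 1 < n \<and> Y (xs ! (n - 1))"
    using last assms(3) by simp
  define j where "j = (LEAST k. i < k \<and> k < n \<and> Y (xs ! k))"
  have j: "i < j" "j < n" "Y (xs ! j)"
    using LeastI[of "\<lambda>k. i < k \<and> k < n \<and> Y (xs ! k)", OF ex] by (simp_all add: j_def)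
  have "\<not> X (xs ! k) \<and> \<not> Y (xs ! k)" if "i < k" "k < j" for k
    using i_max[of k] not_less_Least[of k "\<lambda>k. i < k \<and> k < n \<and> Y (xs ! k)"] that j(2)
    by (auto simp: j_def)
  then show thesis
    using that i j by (simp add: n_def)
qed

lemma walk_bridge:
  assumes R: "is_walk V E R" and ends: "X (hd R)" "Y (last R)" "\<not> X (last R)"
  obtains x y A R' B where "X x" "Y y"
    and "is_walk V E A" "hd A = hd R" "last A = x"
    and "is_walk V E R'" "hd R' = x" "last R' = y"
    and "is_walk V E B" "hd B = y" "last B = last R"
    and "pweight w A + pweight w R' + pweight w B = pweight w R"
    and "set R' \<subseteq> set R" "\<And>c. c \<in> set R' \<Longrightarrow> c \<notin> {x, y} \<Longrightarrow> \<not> X c \<and> \<not> Y c"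
proof -
  obtain i j where ij: "i < j" "j < length R" "X (R ! i)" "Y (R ! j)"
    and between: "\<And>k. i < k \<Longrightarrow> k < j \<Longrightarrow> \<not> X (R ! k) \<and> \<not> Y (R ! k)"
    using bridge_indices[of R X Y, OF is_walk_not_Nil[OF R] ends] by blast
  define n where "n = length R"
  have R_ends: "hd R = R ! 0" "last R = R ! (n - 1)"
    using is_walk_not_Nil[OF R] by (simp_all add: n_def hd_conv_nth last_conv_nth)
  have "set (segment R i j) \<subseteq> set R"
    by (auto simp: segment_def dest: in_set_dropD in_set_takeD)
  moreover have "\<not> X c \<and> \<not> Y c" if c: "c \<in> set (segment R i j)" "c \<notin> {R ! i, R ! j}" for c
  proof -
    obtain k where "i \<le> k" "k \<le> j" "c = R ! k"
      using c(1) set_segment[OF ij(2)] by auto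
    then show ?thesis
      using between[of k] c(2) by (cases "k = i \<or> k = j") auto
  qed
  moreover have
    "pweight w (segment R 0 i) + pweight w (segment R i j) + pweight w (segment R j (n - 1)) = pweight w R"
    using pweight_segment_split3[of i j R w] ij by (simp add: n_def)
  ultimately show thesis
    using that[of "R ! i" "R ! j" "segment R 0 i" "segment R i j" "segment R j (n - 1)"]
      is_walk_segment[OF R] ij R_ends by (simp add: n_def hd_segment last_segment)
qed

lemma walk_remove_loop:
  assumes "is_walk V E (xs @ r # ys @ r # zs)"
  shows "is_walk V E (xs @ r # zs)" and "is_walk V E (r # ys @ [r])"
    and "pweight w (xs @ r # ys @ r # zs) = pweight w (xs @ r # zs) + pweight w (r # ys @ [r])"
proof -
  show "is_walk V E (xs @ r # zs)" "is_walk V E (r # ys @ [r])"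
    using assms unfolding is_walk_iff_successively
    by (auto simp: successively_append_iff successively_Cons hd_append)
  have "pweight w (xs @ r # ys @ r # zs) = pweight w (xs @ [r]) + pweight w ((r # ys) @ r # zs)"
    using pweight_append_shared[of w xs r "ys @ r # zs"] by simp
  also have "\<dots> = pweight w (xs @ [r]) + pweight w (r # ys @ [r]) + pweight w (r # zs)"
    using pweight_append_shared[of w "r # ys" r zs] by simp
  finally show "pweight w (xs @ r # ys @ r # zs) = pweight w (xs @ r # zs) + pweight w (r # ys @ [r])"
    using pweight_append_shared[of w xs r zs] by simp
qed

section \<open>Shortest paths in graphs whose cycles have positive weight\<close>

lemma dist_le_pweight: "path_from_to V E p x y \<Longrightarrow> dist V E w x y \<le> ereal (pweight w p)"
  unfolding dist_def by (rule Inf_lower) auto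

lemma shortest_path_dist: "shortest_path V E w P x y \<Longrightarrow> dist V E w x y = ereal (pweight w P)"
  by (simp add: shortest_path_def)

lemma shortest_pathD:
  assumes "shortest_path V E w P s t"
  shows "is_walk V E P" "distinct P" "hd P = s" "last P = t"
  using assms by (auto simp: shortest_path_def path_from_to_def is_path_def)

locale positive_cycle_graph =
  fixes V :: "'a set" and E :: "('a \<times> 'a) set" and w :: "'a \<Rightarrow> 'a \<Rightarrow> real"
  assumes cycle_weight_pos: "\<And>c. is_cycle V E c \<Longrightarrow> pweight w c > 0"
begin

lemma closed_walk_weight_pos:
  "is_walk V E c \<Longrightarrow> 2 \<le> length c \<Longrightarrow> hd c = last c \<Longrightarrow> pweight w c > 0"
proof (induction "length c" arbitrary: c rule: less_induct)
  case less
  show ?case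
  proof (cases "distinct (tl c)")
    case True
    then show ?thesis
      using less.prems cycle_weight_pos by (simp add: is_cycle_def)
  next
    case False
    obtain a t where c: "c = a # t"
      using less.prems by (cases c) auto
    with False obtain xs ys zs r where "t = xs @ [r] @ ys @ [r] @ zs"
      using not_distinct_decomp by fastforce
    then have c_split: "c = (a # xs) @ r # ys @ r # zs"
      using c by simp
    note loop = walk_remove_loop[OF less.prems(1)[unfolded c_split]]
    have "pweight w ((a # xs) @ r # zs) > 0"
      using less.hyps[OF _ loop(1)] less.prems(3) unfolding c_split by (cases zs) auto
    moreover have "pweight w (r # ys @ [r]) > 0"
      using less.hyps[OF _ loop(2)] unfolding c_split by auto
    ultimately show ?thesis
      using loop(3) c_split by simp
  qed
qed

lemma closed_walk_pair_weight_pos: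
  assumes "is_walk V E A" "is_walk V E B" "last A = hd B" "last B = hd A" "2 \<le> length A"
  shows "pweight w A + pweight w B > 0"
proof -
  have ne: "A \<noteq> []" "B \<noteq> []"
    using assms is_walk_not_Nil by blast+
  have "length (join_walk A B) \<ge> 2"
    using assms(5) by (simp add: join_walk_def)
  then have "pweight w (join_walk A B) > 0"
    using assms ne by (intro closed_walk_weight_pos is_walk_join_walk) (auto simp: join_walk_simps)
  then show ?thesis
    using ne assms by (simp add: pweight_join_walk)
qed

lemma path_within_walk:
  "is_walk V E p \<Longrightarrow>
    \<exists>q. is_path V E q \<and> hd q = hd p \<and> last q = last p \<and> set q \<subseteq> set p \<and> pweight w q \<le> pweight w p"
proof (induction "length p" arbitrary: p rule: less_induct)
  case less
  show ?case
  proof (cases "distinct p")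
    case True
    then show ?thesis
      using less.prems by (auto simp: is_path_def)
  next
    case False
    then obtain xs ys zs r where p_split: "p = xs @ r # ys @ r # zs"
      using not_distinct_decomp by fastforce
    note loop = walk_remove_loop[OF less.prems[unfolded p_split]]
    obtain q where q: "is_path V E q" "hd q = hd (xs @ r # zs)" "last q = last (xs @ r # zs)"
      "set q \<subseteq> set (xs @ r # zs)" "pweight w q \<le> pweight w (xs @ r # zs)"
      using less.hyps[OF _ loop(1)] p_split by auto
    have "pweight w (r # ys @ [r]) > 0"
      using closed_walk_weight_pos[OF loop(2)] by simp
    then show ?thesis
      using q loop(3) p_split by (intro exI[of _ q]) (cases xs; cases zs; auto)
  qed
qed

lemma shortest_path_le_walk:
  assumes "shortest_path V E w P s t" "is_walk V E W" "hd W = s" "last W = t"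
  shows "pweight w P \<le> pweight w W"
proof -
  obtain q where q: "is_path V E q" "hd q = s" "last q = t" "pweight w q \<le> pweight w W"
    using path_within_walk[OF assms(2)] assms(3,4) by blast
  then have "ereal (pweight w P) \<le> ereal (pweight w q)"
    using assms(1) dist_le_pweight[of V E q s t w] by (simp add: shortest_path_def path_from_to_def)
  then show ?thesis
    using q by simp
qed

lemma shortest_path_within_light_walk:
  assumes "shortest_path V E w P s t" "is_walk V E W" "hd W = s" "last W = t" "pweight w W \<le> pweight w P"
  shows "\<exists>Q. shortest_path V E w Q s t \<and> set Q \<subseteq> set W"
proof -
  obtain q where q: "is_path V E q" "hd q = s" "last q = t" "set q \<subseteq> set W" "pweight w q \<le> pweight w W"
    using path_within_walk[OF assms(2)] assms(3,4) by blast
  then have "path_from_to V E q s t"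
    by (simp add: path_from_to_def)
  moreover have "pweight w q = pweight w P"
    using shortest_path_le_walk[OF assms(1), of q] q assms(5) by (simp add: is_path_def)
  ultimately show ?thesis
    using q assms(1) by (auto simp: shortest_path_def)
qed

lemma segment_le_walk:
  assumes sp: "shortest_path V E w P s t" and ij: "i \<le> j" "j < length P"
    and W: "is_walk V E W" "hd W = P ! i" "last W = P ! j"
  shows "pweight w (segment P i j) \<le> pweight w W"
proof -
  note P = shortest_pathD[OF sp]
  have i: "i < length P"
    using ij by simp
  note S = splice_walk[OF P(1) i ij(2) W]
  have "pweight w P \<le> pweight w (splice P i j W)"
    using shortest_path_le_walk[OF sp S(1)] S(2,3) P(3,4) ij by simp
  then show ?thesis
    using S(4) pweight_segment_split3[OF ij, of w] ij by simp
qed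

lemma shortest_path_splice:
  assumes sp: "shortest_path V E w P s t" and ij: "i \<le> j" "j < length P"
    and W: "is_walk V E W" "hd W = P ! i" "last W = P ! j"
    and light: "pweight w W \<le> pweight w (segment P i j)"
  shows "\<exists>Q. shortest_path V E w Q s t \<and>
    set Q \<subseteq> set (segment P 0 i) \<union> set W \<union> set (segment P j (length P - 1))"
proof -
  note P = shortest_pathD[OF sp]
  have i: "i < length P"
    using ij by simp
  note S = splice_walk[OF P(1) i ij(2) W]
  have "pweight w (splice P i j W) \<le> pweight w P"
    using S(4) pweight_segment_split3[OF ij, of w] ij light by simp
  then show ?thesis
    using shortest_path_within_light_walk[OF sp S(1)] S(2,3,5) P(3,4) ij by simp
qed

lemma light_walk_meets_path_inside_segment:
  assumes sp: "shortest_path V E w P s t" and ij: "i \<le> j" "j < length P"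
    and Q: "is_walk V E Q" "hd Q = P ! i" "last Q = P ! j"
    and light: "pweight w Q \<le> pweight w (segment P i j)"
    and c: "c \<in> set Q" "c \<in> set P"
  shows "i \<le> pos P c \<and> pos P c \<le> j"
proof (rule ccontr)
  assume outside: "\<not> (i \<le> pos P c \<and> pos P c \<le> j)"
  note P = shortest_pathD[OF sp]
  define r where "r = pos P c"
  define m where "m = length Q"
  obtain q where q: "q < m" "Q ! q = c"
    using c(1) by (auto simp: m_def in_set_conv_nth)
  have r: "r < length P" "P ! r = c"
    using c(2) P(2) by (simp_all add: r_def pos_less_length nth_pos)
  have Q_ends: "Q ! 0 = P ! i" "Q ! (m - 1) = P ! j"
    using Q is_walk_not_Nil[OF Q(1)] by (auto simp: m_def hd_conv_nth last_conv_nth)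
  have Q_split: "pweight w Q = pweight w (segment Q 0 q) + pweight w (segment Q q (m - 1))"
    using pweight_segment_split[of 0 q "m - 1" Q w] segment_whole[of Q] q is_walk_not_Nil[OF Q(1)]
    by (simp add: m_def)
  note Qseg = is_walk_segment[OF Q(1)]
  note Pseg = is_walk_segment[OF P(1)]
  \<comment> \<open>If c lies before i (after j), the piece of P from c to i (from j to c) and the part of Q
    up to c (from c on) form a closed walk of weight at most 0.\<close>
  consider "r < i" | "j < r"
    using outside r_def by linarith
  then show False
  proof cases
    case 1
    have "pweight w (segment P r j) \<le> pweight w (segment Q q (m - 1))"
      using segment_le_walk[OF sp _ ij(2) Qseg] q r ij 1 Q_ends
      by (simp add: m_def hd_segment last_segment)
    moreover have "pweight w (segment P r j) = pweight w (segment P r i) + pweight w (segment P i j)"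
      using pweight_segment_split[of r i j P w] 1 ij by simp
    moreover have "pweight w (segment P r i) + pweight w (segment Q 0 q) > 0"
      using closed_walk_pair_weight_pos[OF Pseg Qseg] q r ij 1 Q_ends
      by (simp add: m_def hd_segment last_segment length_segment)
    ultimately show False
      using Q_split light by linarith
  next
    case 2
    have "pweight w (segment P i r) \<le> pweight w (segment Q 0 q)"
      using segment_le_walk[OF sp _ r(1) Qseg] q r ij 2 Q_ends
      by (simp add: m_def hd_segment last_segment)
    moreover have "pweight w (segment P i r) = pweight w (segment P i j) + pweight w (segment P j r)"
      using pweight_segment_split[of i j r P w] r 2 ij by simp
    moreover have "pweight w (segment P j r) + pweight w (segment Q q (m - 1)) > 0"
      using closed_walk_pair_weight_pos[OF Pseg Qseg] q r ij 2 Q_ends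
      by (simp add: m_def hd_segment last_segment length_segment)
    ultimately show False
      using Q_split light by linarith
  qed
qed

end

section \<open>Rerouting shortest paths\<close>

\<comment> \<open>x lies on both crosswise reroutes: P up to a, then R, then P' from c' to e', then P; and
  P' up to b', then P from b to e, then P'.\<close>
lemma crossing_reroutes_meet_in_common_vertices:
  assumes P: "distinct P" and P': "distinct P'"
    and abe: "a < b" "b < e" "e < length P"
    and bce': "b' < c'" "c' \<le> e'" "e' < length P'"
    and meet: "P' ! b' = P ! b" "P' ! e' = P ! e"
    and R_meet: "set R \<inter> (set P \<union> set P') \<subseteq> {P ! a, P' ! c'}"
    and x: "x \<in> set (segment P 0 a) \<union> set R \<union> set (segment P' c' e') \<union> set (segment P e (length P - 1))"
    and x': "x \<in> set (segment P' 0 b') \<union> set (segment P b e) \<union> set (segment P' e' (length P' - 1))"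
  shows "x \<in> set P \<inter> set P' - {P ! b}"
proof -
  have pos_P: "pos P (P ! a) = a" "pos P (P ! b) = b"
    using pos_nth[OF P] abe by auto
  have pos_P': "pos P' (P' ! b') = b'" "pos P' (P' ! c') = c'"
    using pos_nth[OF P'] bce' by auto
  have ends: "length P - 1 < length P" "length P' - 1 < length P'"
    using abe bce' by simp_all
  have in_Q': "(x \<in> set P' \<and> (pos P' x \<le> b' \<or> e' \<le> pos P' x)) \<or>
      (x \<in> set P \<and> b \<le> pos P x \<and> pos P x \<le> e)"
    using x' mem_segment_iff[OF P', of b' x 0] mem_segment_iff[OF P, of e x b]
      mem_segment_iff[OF P' ends(2), of x e'] abe bce' by auto
  moreover have "x \<in> set R \<Longrightarrow> x = P ! a \<or> x = P' ! c'"
    using R_meet in_Q' by blast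
  ultimately have in_Q: "(x \<in> set P \<and> (pos P x \<le> a \<or> e \<le> pos P x)) \<or>
      (x \<in> set P' \<and> c' \<le> pos P' x \<and> pos P' x \<le> e')"
    using x mem_segment_iff[OF P, of a x 0] mem_segment_iff[OF P', of e' x c']
      mem_segment_iff[OF P ends(1), of x e] pos_P(1) pos_P'(2) abe bce' by auto
  have on_P: "x \<in> set P"
  proof (cases "x \<in> set P")
    case False
    then have "pos P' x = e'" "x \<in> set P'"
      using in_Q in_Q' bce' by auto
    then show ?thesis
      using nth_pos[OF P', of x] meet(2) abe(3) by (metis nth_mem)
  qed
  have on_P': "x \<in> set P'"
  proof (cases "x \<in> set P'")
    case False
    then have "pos P x = e"
      using in_Q in_Q' abe by auto
    then show ?thesis
      using nth_pos[OF P on_P] meet(2) bce'(3) by (metis nth_mem)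
  qed
  have "x \<noteq> P ! b"
  proof
    assume "x = P ! b"
    then have "pos P x = b" "pos P' x = b'"
      using pos_P(2) pos_P'(1) meet(1) by simp_all
    then show False
      using in_Q abe bce' by auto
  qed
  with on_P on_P' show ?thesis
    by blast
qed

context positive_cycle_graph
begin

lemma reroute_within_path:
  assumes sp: "shortest_path V E w P s t" and abc: "a < b" "b < c" "c < length P"
    and R: "is_walk V E R" "hd R = P ! a" "last R = P ! c"
    and light: "pweight w R \<le> pweight w (segment P a c)"
    and avoid: "P ! b \<notin> set R" "set R \<inter> set P' \<subseteq> set P"
  shows "\<exists>Q. shortest_path V E w Q s t \<and> set Q \<inter> set P' \<subseteq> set P \<inter> set P' - {P ! b}"
proof -
  note P = shortest_pathD[OF sp]
  obtain Q where Q: "shortest_path V E w Q s t"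
    and Q_sub: "set Q \<subseteq> set (segment P 0 a) \<union> set R \<union> set (segment P c (length P - 1))"
    using shortest_path_splice[OF sp _ _ R light] abc by auto
  have "x \<in> set P \<and> x \<noteq> P ! b" if "x \<in> set Q" "x \<in> set P'" for x
  proof (cases "x \<in> set R")
    case False
    then have "x \<in> set P \<and> (pos P x \<le> a \<or> c \<le> pos P x)"
      using that Q_sub abc mem_segment_iff[OF P(2)] by fastforce
    then show ?thesis
      using abc pos_nth[OF P(2), of b] by auto
  qed (use that avoid in auto)
  then show ?thesis
    using Q by blast
qed

lemma reroute_across_paths:
  assumes sp: "shortest_path V E w P s t" and sp': "shortest_path V E w P' s' t'"
    and abe: "a < b" "b < e" "e < length P"
    and bce': "b' < c'" "c' \<le> e'" "e' < length P'"
    and meet: "P' ! b' = P ! b" "P' ! e' = P ! e"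
    and R: "is_walk V E R" "hd R = P ! a" "last R = P' ! c'"
    and R_meet: "set R \<inter> (set P \<union> set P') \<subseteq> {P ! a, P' ! c'}"
    and light: "pweight w R + pweight w (segment P' c' e') \<le> pweight w (segment P a e)"
    and light': "pweight w (segment P b e) \<le> pweight w (segment P' b' e')"
  shows "\<exists>Q Q'. shortest_path V E w Q s t \<and> shortest_path V E w Q' s' t' \<and>
    set Q \<inter> set Q' \<subseteq> set P \<inter> set P' - {P ! b}"
proof -
  note P = shortest_pathD[OF sp] and P' = shortest_pathD[OF sp']
  have seg': "is_walk V E (segment P' c' e')" "hd (segment P' c' e') = P' ! c'" "last (segment P' c' e') = P ! e"
    using bce' meet is_walk_segment[OF P'(1)] by (auto simp: hd_segment last_segment)
  have W: "is_walk V E (join_walk R (segment P' c' e'))" "hd (join_walk R (segment P' c' e')) = P ! a"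
    "last (join_walk R (segment P' c' e')) = P ! e"
    "pweight w (join_walk R (segment P' c' e')) = pweight w R + pweight w (segment P' c' e')"
    "set (join_walk R (segment P' c' e')) = set R \<union> set (segment P' c' e')"
    using R seg' is_walk_join_walk[OF R(1) seg'(1)] is_walk_not_Nil[OF R(1)] is_walk_not_Nil[OF seg'(1)]
    by (simp_all add: join_walk_simps)
  obtain Q where Q: "shortest_path V E w Q s t" and Q_sub:
    "set Q \<subseteq> set (segment P 0 a) \<union> set R \<union> set (segment P' c' e') \<union> set (segment P e (length P - 1))"
    using shortest_path_splice[OF sp _ abe(3) W(1-3)] W(4,5) light abe by auto
  have seg: "is_walk V E (segment P b e)" "hd (segment P b e) = P' ! b'" "last (segment P b e) = P' ! e'"
    using abe meet is_walk_segment[OF P(1)] by (simp_all add: hd_segment last_segment)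
  have "b' \<le> e'"
    using bce' by simp
  then obtain Q' where Q': "shortest_path V E w Q' s' t'" and Q'_sub:
    "set Q' \<subseteq> set (segment P' 0 b') \<union> set (segment P b e) \<union> set (segment P' e' (length P' - 1))"
    using shortest_path_splice[OF sp' _ bce'(3) seg light'] by blast
  have "set Q \<inter> set Q' \<subseteq> set P \<inter> set P' - {P ! b}"
    using crossing_reroutes_meet_in_common_vertices[OF P(2) P'(2) abe bce' meet R_meet] Q_sub Q'_sub by blast
  then show ?thesis
    using Q Q' by blast
qed

lemma exchange_avoiding_vertex_at_bridge:
  assumes sp1: "shortest_path V E w P1 s1 t1" and sp2: "shortest_path V E w P2 s2 t2"
    and ibj1: "i1 < b1" "b1 < j1" "j1 < length P1"
    and ibj2: "i2 < b2" "b2 < j2" "j2 < length P2"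
    and meet: "P1 ! i1 = P2 ! i2" "P1 ! j1 = P2 ! j2" "P1 ! b1 = P2 ! b2"
    and A: "is_walk V E A" "hd A = P1 ! i1" "last A = x"
    and R: "is_walk V E R" "hd R = x" "last R = y"
    and B: "is_walk V E B" "hd B = y" "last B = P1 ! j1"
    and light: "pweight w A + pweight w R + pweight w B \<le> pweight w (segment P1 i1 j1)"
    and x: "x \<in> set P1" "i1 \<le> pos P1 x" "pos P1 x < b1"
    and y: "(y \<in> set P1 \<and> b1 < pos P1 y \<and> pos P1 y \<le> j1) \<or>
      (y \<in> set P2 \<and> b2 < pos P2 y \<and> pos P2 y \<le> j2)"
    and avoid: "P1 ! b1 \<notin> set R" "set R \<inter> (set P1 \<union> set P2) \<subseteq> {x, y}"
  shows "\<exists>Q1 Q2. shortest_path V E w Q1 s1 t1 \<and> shortest_path V E w Q2 s2 t2 \<and>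
    set Q1 \<inter> set Q2 \<subseteq> set P1 \<inter> set P2 - {P1 ! b1}"
proof -
  note P1 = shortest_pathD[OF sp1] and P2 = shortest_pathD[OF sp2]
  define a where "a = pos P1 x"
  have a: "a < length P1" "P1 ! a = x" "i1 \<le> a" "a < b1"
    using x P1(2) by (simp_all add: a_def pos_less_length nth_pos)
  have A_light: "pweight w (segment P1 i1 a) \<le> pweight w A"
    using segment_le_walk[OF sp1 a(3) a(1) A(1)] A a by simp
  have split_a: "pweight w (segment P1 i1 j1) = pweight w (segment P1 i1 a) + pweight w (segment P1 a j1)"
    using pweight_segment_split[of i1 a j1 P1 w] a ibj1 by simp
  from y show ?thesis
  proof
    assume y1: "y \<in> set P1 \<and> b1 < pos P1 y \<and> pos P1 y \<le> j1"
    define c where "c = pos P1 y"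
    have c: "c < length P1" "P1 ! c = y" "b1 < c" "c \<le> j1"
      using y1 P1(2) by (simp_all add: c_def pos_less_length nth_pos)
    have "pweight w (segment P1 c j1) \<le> pweight w B"
      using segment_le_walk[OF sp1 c(4) ibj1(3) B(1)] B c by simp
    moreover have "pweight w (segment P1 a j1) = pweight w (segment P1 a c) + pweight w (segment P1 c j1)"
      using pweight_segment_split[of a c j1 P1 w] a c ibj1 by simp
    ultimately have "pweight w R \<le> pweight w (segment P1 a c)"
      using light A_light split_a by linarith
    moreover have "set R \<inter> set P2 \<subseteq> set P1"
      using avoid(2) x y1 by blast
    moreover have "hd R = P1 ! a" "last R = P1 ! c"
      using R a c by simp_all
    ultimately obtain Q1 where
      "shortest_path V E w Q1 s1 t1" "set Q1 \<inter> set P2 \<subseteq> set P1 \<inter> set P2 - {P1 ! b1}"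
      using reroute_within_path[OF sp1 a(4) c(3) c(1) R(1) _ _ _ avoid(1)] by blast
    then show ?thesis
      using sp2 by blast
  next
    assume y2: "y \<in> set P2 \<and> b2 < pos P2 y \<and> pos P2 y \<le> j2"
    define c where "c = pos P2 y"
    have c: "c < length P2" "P2 ! c = y" "b2 < c" "c \<le> j2"
      using y2 P2(2) by (simp_all add: c_def pos_less_length nth_pos)
    have "pweight w (segment P2 c j2) \<le> pweight w B"
      using segment_le_walk[OF sp2 c(4) ibj2(3) B(1)] B c meet by simp
    then have light_R: "pweight w R + pweight w (segment P2 c j2) \<le> pweight w (segment P1 a j1)"
      using light A_light split_a by linarith
    have light_P2: "pweight w (segment P1 b1 j1) \<le> pweight w (segment P2 b2 j2)"
      using segment_le_walk[OF sp1 _ ibj1(3) is_walk_segment[OF P2(1)], of b1 b2 j2] ibj1 ibj2 meet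
      by (simp add: hd_segment last_segment)
    show ?thesis
      using reroute_across_paths[OF sp1 sp2 a(4) ibj1(2,3) c(3,4) ibj2(3) meet(3)[symmetric] meet(2)[symmetric]
          R(1) _ _ _ light_R light_P2] R a c avoid(2)
      by simp
  qed
qed

lemma exchange_avoiding_vertex:
  assumes sp1: "shortest_path V E w P1 s1 t1" and sp2: "shortest_path V E w P2 s2 t2"
    and ibj1: "i1 < b1" "b1 < j1" "j1 < length P1"
    and ibj2: "i2 < b2" "b2 < j2" "j2 < length P2"
    and meet: "P1 ! i1 = P2 ! i2" "P1 ! j1 = P2 ! j2" "P1 ! b1 = P2 ! b2"
    and same_weight: "pweight w (segment P1 i1 j1) = pweight w (segment P2 i2 j2)"
    and R: "is_walk V E R" "hd R = P1 ! i1" "last R = P1 ! j1"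
    and avoid: "P1 ! b1 \<notin> set R"
    and light: "pweight w R \<le> pweight w (segment P1 i1 j1)"
  shows "\<exists>Q1 Q2. shortest_path V E w Q1 s1 t1 \<and> shortest_path V E w Q2 s2 t2 \<and>
    set Q1 \<inter> set Q2 \<subseteq> set P1 \<inter> set P2 - {P1 ! b1}"
proof -
  note P1 = shortest_pathD[OF sp1] and P2 = shortest_pathD[OF sp2]
  \<comment> \<open>X and Y collect the vertices of the two segments strictly before and strictly after P1 ! b1.
    As R meets P1 and P2 only inside these segments, each of its vertices on P1 or P2 is in X or Y,
    so a bridge of R from X to Y meets P1 and P2 only at its ends.\<close>
  define X where "X c \<longleftrightarrow>
    (c \<in> set P1 \<and> i1 \<le> pos P1 c \<and> pos P1 c < b1) \<or> (c \<in> set P2 \<and> i2 \<le> pos P2 c \<and> pos P2 c < b2)" for c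
  define Y where "Y c \<longleftrightarrow>
    (c \<in> set P1 \<and> b1 < pos P1 c \<and> pos P1 c \<le> j1) \<or> (c \<in> set P2 \<and> b2 < pos P2 c \<and> pos P2 c \<le> j2)" for c
  have pos_meet: "pos P1 (P1 ! i1) = i1" "pos P1 (P1 ! j1) = j1" "pos P1 (P1 ! b1) = b1"
    using pos_nth[OF P1(2)] ibj1 by auto
  have pos_meet2: "pos P2 (P1 ! i1) = i2" "pos P2 (P1 ! j1) = j2" "pos P2 (P1 ! b1) = b2"
    unfolding meet using pos_nth[OF P2(2)] ibj2 by auto
  have X_or_Y: "X c \<or> Y c" if "c \<in> set R" "c \<in> set P1 \<union> set P2" for c
  proof -
    have "c \<noteq> P1 ! b1"
      using that avoid by auto
    then have "c \<in> set P1 \<Longrightarrow> pos P1 c \<noteq> b1" "c \<in> set P2 \<Longrightarrow> pos P2 c \<noteq> b2"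
      using nth_pos[OF P1(2), of c] nth_pos[OF P2(2), of c] meet(3) by metis+
    moreover have "c \<in> set P1 \<Longrightarrow> i1 \<le> pos P1 c \<and> pos P1 c \<le> j1"
      using light_walk_meets_path_inside_segment[OF sp1 _ ibj1(3) R light that(1)] ibj1 by simp
    moreover have "c \<in> set P2 \<Longrightarrow> i2 \<le> pos P2 c \<and> pos P2 c \<le> j2"
      using light_walk_meets_path_inside_segment[OF sp2 _ ibj2(3) R(1), of i2 c] R ibj2 meet light same_weight that(1)
      by simp
    ultimately show ?thesis
      using that unfolding X_def Y_def by fastforce
  qed
  have "X (hd R)" "Y (last R)" "\<not> X (last R)"
    using R ibj1 ibj2 pos_meet pos_meet2 nth_mem[OF ibj1(3)] unfolding X_def Y_def by (auto simp: nth_mem)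
  then obtain x y A R' B where xy: "X x" "Y y"
    and A: "is_walk V E A" "hd A = hd R" "last A = x"
    and R': "is_walk V E R'" "hd R' = x" "last R' = y"
    and B: "is_walk V E B" "hd B = y" "last B = last R"
    and weight_R: "pweight w A + pweight w R' + pweight w B = pweight w R"
    and R'_sub: "set R' \<subseteq> set R"
    and between: "\<And>c. c \<in> set R' \<Longrightarrow> c \<notin> {x, y} \<Longrightarrow> \<not> X c \<and> \<not> Y c"
    by (rule walk_bridge[OF R(1), where w = w]) blast
  note A = A[unfolded R(2)] and B = B[unfolded R(3)]
  have weights: "pweight w A + pweight w R' + pweight w B \<le> pweight w (segment P1 i1 j1)"
    using weight_R light by simp
  have R'_meet: "set R' \<inter> (set P1 \<union> set P2) \<subseteq> {x, y}"
    using between X_or_Y R'_sub by blast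
  have R'_avoid: "P1 ! b1 \<notin> set R'"
    using avoid R'_sub by blast
  from xy(1) show ?thesis
    unfolding X_def
  proof
    assume "x \<in> set P1 \<and> i1 \<le> pos P1 x \<and> pos P1 x < b1"
    then show ?thesis
      using exchange_avoiding_vertex_at_bridge[OF sp1 sp2 ibj1 ibj2 meet A R' B weights _ _ _ _ R'_avoid R'_meet]
        xy(2)
      unfolding Y_def by blast
  next
    assume "x \<in> set P2 \<and> i2 \<le> pos P2 x \<and> pos P2 x < b2"
    moreover have "(y \<in> set P2 \<and> b2 < pos P2 y \<and> pos P2 y \<le> j2) \<or>
        (y \<in> set P1 \<and> b1 < pos P1 y \<and> pos P1 y \<le> j1)"
      using xy(2) unfolding Y_def by blast
    moreover have "hd A = P2 ! i2" "last B = P2 ! j2"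
      using A(2) B(3) meet by simp_all
    moreover have "pweight w A + pweight w R' + pweight w B \<le> pweight w (segment P2 i2 j2)"
      using weights same_weight by simp
    moreover have "P2 ! b2 \<notin> set R'" "set R' \<inter> (set P2 \<union> set P1) \<subseteq> {x, y}"
      using R'_avoid R'_meet meet(3) by auto
    ultimately obtain Q2 Q1 where "shortest_path V E w Q2 s2 t2" "shortest_path V E w Q1 s1 t1"
      "set Q2 \<inter> set Q1 \<subseteq> set P2 \<inter> set P1 - {P2 ! b2}"
      using exchange_avoiding_vertex_at_bridge[OF sp2 sp1 ibj2 ibj1 meet[symmetric] A(1) _ A(3) R' B(1,2)] by blast
    then show ?thesis
      using meet(3) by blast
  qed
qed
end

section \<open>Distance-critical vertices\<close>

lemma exists_path_of_dist_le:
  assumes "finite V" and "dist V E w x y \<le> ereal D"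
  shows "\<exists>p. path_from_to V E p x y \<and> pweight w p \<le> D"
proof -
  define S where "S = {ereal (pweight w p) | p. path_from_to V E p x y}"
  have "{p. path_from_to V E p x y} \<subseteq> {p. set p \<subseteq> V \<and> length p \<le> card V}"
    unfolding path_from_to_def is_path_def is_walk_def
    by (auto simp: distinct_card[symmetric] intro: card_mono[OF assms(1)])
  then have "finite {p. path_from_to V E p x y}"
    using finite_lists_length_le[OF assms(1)] finite_subset by blast
  then have "finite S"
    unfolding S_def by (simp add: setcompr_eq_image)
  moreover have "S \<noteq> {}"
    using assms(2) by (auto simp: dist_def S_def[symmetric] top_ereal_def)
  moreover have "Inf S \<le> ereal D"
    using assms(2) by (simp add: dist_def S_def)
  ultimately have "Min S \<in> S" "Min S \<le> ereal D"
    using Min_in cInf_eq_Min by (metis, metis)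
  then show ?thesis
    unfolding S_def by auto
qed

lemma critical_vertex_on_shortest_path:
  assumes sp: "shortest_path V E w M u v" and z: "dist_critical V E w u v z"
  shows "z \<in> set M"
proof (rule ccontr)
  assume z_off: "z \<notin> set M"
  have "u \<in> set M" "v \<in> set M"
    using shortest_pathD[OF sp] is_walk_not_Nil by (metis hd_in_set last_in_set)+
  then have "dist V E w u v < dist (del_vertex_V V z) (del_vertex_E E z) w u v"
    using z z_off by (auto simp: dist_critical_def)
  moreover have "path_from_to (del_vertex_V V z) (del_vertex_E E z) M u v"
    using sp z_off
    by (auto simp: shortest_path_def path_from_to_def is_path_def is_walk_def del_vertex_V_def del_vertex_E_def
        dest: nth_mem)
  ultimately show False
    using dist_le_pweight shortest_path_dist[OF sp] by (metis not_le)
qed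

lemma noncritical_vertex_bypass:
  assumes "finite V" and sp: "shortest_path V E w M u v"
    and z: "z \<in> V" "\<not> dist_critical V E w u v z"
  obtains R where "is_walk V E R" "hd R = u" "last R = v" "z \<notin> set R" "pweight w R \<le> pweight w M"
proof -
  have "dist (del_vertex_V V z) (del_vertex_E E z) w u v \<le> ereal (pweight w M)"
    using z shortest_path_dist[OF sp] by (auto simp: dist_critical_def not_less)
  moreover have "finite (del_vertex_V V z)"
    using assms(1) by (simp add: del_vertex_V_def)
  ultimately obtain R where
    R: "path_from_to (del_vertex_V V z) (del_vertex_E E z) R u v" "pweight w R \<le> pweight w M"
    using exists_path_of_dist_le[of "del_vertex_V V z" "del_vertex_E E z" w u v "pweight w M"] by blast
  then have "is_walk V E R" "z \<notin> set R"
    by (auto simp: path_from_to_def is_path_def is_walk_def del_vertex_V_def del_vertex_E_def)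
  then show thesis
    using that R by (auto simp: path_from_to_def)
qed

lemma kstar_le_n_common:
  "shortest_path V E w Q1 s1 t1 \<Longrightarrow> shortest_path V E w Q2 s2 t2 \<Longrightarrow>
    kstar V E w s1 t1 s2 t2 \<le> n_common Q1 s1 t1 Q2 s2 t2"
  unfolding kstar_def by (rule Least_le) blast

context positive_cycle_graph
begin

lemma shortest_subpath:
  assumes sp: "shortest_path V E w P s t" and uv: "precedes P u v"
  shows "shortest_path V E w (subpath P u v) u v"
proof -
  note P = shortest_pathD[OF sp]
  define i j where "i = pos P u" and "j = pos P v"
  have ij: "i \<le> j" "j < length P" "P ! i = u" "P ! j = v"
    using uv P(2) by (auto simp: precedes_def i_def j_def pos_less_length nth_pos)
  define M where "M = segment P i j"
  have M: "is_walk V E M" "distinct M" "hd M = u" "last M = v"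
    using is_walk_segment[OF P(1) ij(1,2)] distinct_segment[OF P(2)] ij
    by (simp_all add: M_def hd_segment last_segment)
  then have "path_from_to V E M u v"
    by (simp add: path_from_to_def is_path_def)
  moreover have "ereal (pweight w M) \<le> dist V E w u v"
    unfolding dist_def M_def
    by (rule Inf_greatest) (auto simp: path_from_to_def is_path_def ij intro!: segment_le_walk[OF sp ij(1,2)])
  ultimately show ?thesis
    using dist_le_pweight[of V E M u v w]
    by (simp add: shortest_path_def subpath_eq_segment M_def i_def j_def)
qed

lemma common_vertex_is_critical:
  assumes fin: "finite V"
    and sp1: "shortest_path V E w P1 s1 t1" and sp2: "shortest_path V E w P2 s2 t2"
    and minimal: "n_common P1 s1 t1 P2 s2 t2 = kstar V E w s1 t1 s2 t2"
    and uv: "precedes P1 u v" "precedes P2 u v"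
    and z: "z \<in> set (subpath P1 u v)" "z \<in> set (subpath P2 u v)"
  shows "dist_critical V E w u v z"
proof (rule ccontr)
  assume noncritical: "\<not> dist_critical V E w u v z"
  note P1 = shortest_pathD[OF sp1] and P2 = shortest_pathD[OF sp2]
  define i1 b1 j1 where "i1 = pos P1 u" and "b1 = pos P1 z" and "j1 = pos P1 v"
  define i2 b2 j2 where "i2 = pos P2 u" and "b2 = pos P2 z" and "j2 = pos P2 v"
  have on_P1: "j1 < length P1" "P1 ! i1 = u" "P1 ! b1 = z" "P1 ! j1 = v" "z \<in> set P1" "i1 \<le> b1" "b1 \<le> j1"
    using uv(1) z(1) P1(2) mem_segment_iff[OF P1(2)]
    by (auto simp: precedes_def subpath_eq_segment i1_def b1_def j1_def pos_less_length nth_pos)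
  have on_P2: "j2 < length P2" "P2 ! i2 = u" "P2 ! b2 = z" "P2 ! j2 = v" "i2 \<le> b2" "b2 \<le> j2" "z \<in> set P2"
    using uv(2) z(2) P2(2) mem_segment_iff[OF P2(2)]
    by (auto simp: precedes_def subpath_eq_segment i2_def b2_def j2_def pos_less_length nth_pos)
  have "z \<in> V"
    using on_P1(5) P1(1) by (auto simp: is_walk_def)
  then have "z \<noteq> u" "z \<noteq> v"
    using noncritical by (auto simp: dist_critical_def)
  then have ibj1: "i1 < b1" "b1 < j1" and ibj2: "i2 < b2" "b2 < j2"
    using on_P1 on_P2 le_neq_implies_less by metis+
  have M1: "shortest_path V E w (segment P1 i1 j1) u v" and M2: "shortest_path V E w (segment P2 i2 j2) u v"
    using shortest_subpath[OF sp1 uv(1)] shortest_subpath[OF sp2 uv(2)]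
    by (simp_all add: subpath_eq_segment i1_def j1_def i2_def j2_def)
  obtain R where R: "is_walk V E R" "hd R = P1 ! i1" "last R = P1 ! j1" "P1 ! b1 \<notin> set R"
      "pweight w R \<le> pweight w (segment P1 i1 j1)"
    using noncritical_vertex_bypass[OF fin M1 \<open>z \<in> V\<close> noncritical] on_P1 by metis
  have "pweight w (segment P1 i1 j1) = pweight w (segment P2 i2 j2)"
    using shortest_path_dist[OF M1] shortest_path_dist[OF M2] by simp
  then obtain Q1 Q2 where Q: "shortest_path V E w Q1 s1 t1" "shortest_path V E w Q2 s2 t2"
    and fewer: "set Q1 \<inter> set Q2 \<subseteq> set P1 \<inter> set P2 - {z}"
    using exchange_avoiding_vertex[OF sp1 sp2 ibj1 on_P1(1) ibj2 on_P2(1) _ _ _ _ R] on_P1 on_P2 by auto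
  have "hd P1 = P1 ! 0" "last P1 = P1 ! (length P1 - 1)"
    using is_walk_not_Nil[OF P1(1)] by (simp_all add: hd_conv_nth last_conv_nth)
  then have "pos P1 s1 = 0" "pos P1 t1 = length P1 - 1"
    using P1(3,4) pos_nth[OF P1(2), of 0] pos_nth[OF P1(2), of "length P1 - 1"] on_P1(1)
    by (simp_all add: is_walk_not_Nil[OF P1(1)])
  then have "z \<notin> {s1, t1} \<inter> {s2, t2}"
    using ibj1 on_P1(1) by (auto simp: b1_def)
  then have "set Q1 \<inter> set Q2 - {s1, t1} \<inter> {s2, t2} \<subset> set P1 \<inter> set P2 - {s1, t1} \<inter> {s2, t2}"
    using fewer on_P1(5) on_P2(7) by blast
  then have "n_common Q1 s1 t1 Q2 s2 t2 < n_common P1 s1 t1 P2 s2 t2"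
    unfolding n_common_def by (rule psubset_card_mono[rotated]) simp
  then show False
    using kstar_le_n_common[OF Q] minimal by simp
qed

end

theorem lemma5:
  fixes V :: "'a set" and E :: "('a \<times> 'a) set" and w :: "'a \<Rightarrow> 'a \<Rightarrow> real"
    and s1 t1 s2 t2 u v :: 'a and P1 P2 :: "'a list"
  assumes "wf_digraph V E"
    and "\<And>c. is_cycle V E c \<Longrightarrow> pweight w c > 0"
    and "reachable V E s1 t1" and "reachable V E s2 t2"
    and "shortest_path V E w P1 s1 t1" and "shortest_path V E w P2 s2 t2"
    and "n_common P1 s1 t1 P2 s2 t2 = kstar V E w s1 t1 s2 t2"
    and "concordant P1 s1 t1 P2 s2 t2 u v"
  shows "card (set (subpath P1 u v) \<inter> set (subpath P2 u v)) = delta V E w u v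
    \<and> set (subpath P1 u v) \<inter> set (subpath P2 u v) = {z. dist_critical V E w u v z}"
proof -
  interpret positive_cycle_graph V E w
    by unfold_locales (rule assms(2))
  have fin: "finite V"
    using assms(1) by (simp add: wf_digraph_def)
  have uv: "precedes P1 u v" "precedes P2 u v"
    using assms(8) by (simp_all add: concordant_def)
  have "set (subpath P1 u v) \<inter> set (subpath P2 u v) = {z. dist_critical V E w u v z}"
  proof
    show "set (subpath P1 u v) \<inter> set (subpath P2 u v) \<subseteq> {z. dist_critical V E w u v z}"
      using common_vertex_is_critical[OF fin assms(5-7) uv] by blast
    show "{z. dist_critical V E w u v z} \<subseteq> set (subpath P1 u v) \<inter> set (subpath P2 u v)"
      using critical_vertex_on_shortest_path[OF shortest_subpath[OF assms(5) uv(1)]]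
        critical_vertex_on_shortest_path[OF shortest_subpath[OF assms(6) uv(2)]] by blast
  qed
  then show ?thesis
    by (simp add: delta_def)
qed

end
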